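(* Let $M_{pq}=(W,V_{pq})$ be the inquisitive model with $W=\{w_1,w_2,w_3\}$, $V_{pq}(w_1)=\{p\}$, $V_{pq}(w_2)=\{q\}$, $V_{pq}(w_3)=\emptyset$, where $p,q$ are distinct propositional letters. Define the families of states $A=\{\{w_1,w_2\},\{w_1,w_3\}\}^{\downarrow}$, $B=\{\{w_1,w_2\},\{w_2,w_3\}\}^{\downarrow}$ and $C=\{\{w_1,w_2\},\{w_3\}\}^{\downarrow}$ (these are, in $M_{pq}$, the propositions of $?p\to?q$, $?q\to?p$ and $(?p\to?q)\land(?q\to?p)$ respectively). Let $\varphi(a,b)$ be a formula of $\textsf{INQ}^-$ in which $p,q$ do not occur, and let $\varphi(?p,?q)$ be the result of substituting $?p$ for $a$ and $?q$ for $b$. Then $[\varphi(?p,?q)]_{M_{pq}}\neq A$, $\neq B$ and $\neq C$.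
   Context: $\textsf{INQ}^-$ is the propositional language built from countably many propositional letters using $\bot,\top$, unary $\neg,?$ and binary $\land$, $\vee$ (inquisitive disjunction), $\otimes$ (tensor). A model is $M=(W,V)$ with $V$ assigning to each world a set of letters. Support at $s\subseteq W$: $s\models p$ iff $p\in V(w)$ for all $w\in s$; $s\models\bot$ iff $s=\emptyset$; $s\models\top$ always; $s\models\psi\land\chi$ iff both; $s\models\psi\vee\chi$ iff $s\models\psi$ or $s\models\chi$; $s\models\psi\otimes\chi$ iff $s=t_1\cup t_2$ for some $t_1\models\psi$, $t_2\models\chi$; $s\models\psi\to\chi$ iff for all $t\subseteq s$, $t\models\psi$ implies $t\models\chi$; $s\models\neg\psi$ iff $s\models\psi\to\bot$; $s\models?\psi$ iff $s\models\psi$ or $s\models\neg\psi$. $[\varphi]_M=\{s\subseteq W: s\models\varphi\}$. For a family $S$ of sets, $S^{\downarrow}=\{t: t\subseteq s \text{ for some } s\in S\}$. *)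

theory Defs
  imports Main
begin

datatype 'v form =
    FBot | FTop | Atom 'v | FNeg "'v form" | FQue "'v form"
  | FConj "'v form" "'v form" | FDisj "'v form" "'v form" | FTens "'v form" "'v form"

fun atoms :: "'v form \<Rightarrow> 'v set" where
  "atoms FBot = {}"
| "atoms FTop = {}"
| "atoms (Atom p) = {p}"
| "atoms (FNeg f) = atoms f"
| "atoms (FQue f) = atoms f"
| "atoms (FConj f g) = atoms f \<union> atoms g"
| "atoms (FDisj f g) = atoms f \<union> atoms g"
| "atoms (FTens f g) = atoms f \<union> atoms g"

fun subst :: "('v \<Rightarrow> 'v form) \<Rightarrow> 'v form \<Rightarrow> 'v form" where
  "subst \<sigma> FBot = FBot"
| "subst \<sigma> FTop = FTop"
| "subst \<sigma> (Atom p) = \<sigma> p"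
| "subst \<sigma> (FNeg f) = FNeg (subst \<sigma> f)"
| "subst \<sigma> (FQue f) = FQue (subst \<sigma> f)"
| "subst \<sigma> (FConj f g) = FConj (subst \<sigma> f) (subst \<sigma> g)"
| "subst \<sigma> (FDisj f g) = FDisj (subst \<sigma> f) (subst \<sigma> g)"
| "subst \<sigma> (FTens f g) = FTens (subst \<sigma> f) (subst \<sigma> g)"

fun supp :: "('w \<Rightarrow> 'v set) \<Rightarrow> 'w set \<Rightarrow> 'v form \<Rightarrow> bool" where
  "supp V s FBot = (s = {})"
| "supp V s FTop = True"
| "supp V s (Atom p) = (\<forall>w\<in>s. p \<in> V w)"
| "supp V s (FNeg f) = (\<forall>t. t \<subseteq> s \<longrightarrow> supp V t f \<longrightarrow> t = {})"
| "supp V s (FQue f) = (supp V s f \<or> (\<forall>t. t \<subseteq> s \<longrightarrow> supp V t f \<longrightarrow> t = {}))"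
| "supp V s (FConj f g) = (supp V s f \<and> supp V s g)"
| "supp V s (FDisj f g) = (supp V s f \<or> supp V s g)"
| "supp V s (FTens f g) = (\<exists>t1 t2. s = t1 \<union> t2 \<and> supp V t1 f \<and> supp V t2 g)"

definition prop_of :: "'w set \<times> ('w \<Rightarrow> 'v set) \<Rightarrow> 'v form \<Rightarrow> 'w set set" where
  "prop_of M f = {s. s \<subseteq> fst M \<and> supp (snd M) s f}"

definition downset :: "'a set set \<Rightarrow> 'a set set" where
  "downset S = {t. \<exists>s\<in>S. t \<subseteq> s}"

text \<open>The model M_pq, with worlds w1,w2,w3 represented as 1,2,3.\<close>
definition Mpq :: "'v \<Rightarrow> 'v \<Rightarrow> nat set \<times> (nat \<Rightarrow> 'v set)" where
  "Mpq p q = ({1,2,3}, (\<lambda>w. if w = 1 then {p} else if w = 2 then {q} else {}))"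

definition famA :: "nat set set" where "famA = downset {{1,2},{1,3}}"
definition famB :: "nat set set" where "famB = downset {{1,2},{2,3}}"
definition famC :: "nat set set" where "famC = downset {{1,2},{3}}"

end

(* Support is compositional: the proposition of a formula is obtained from the propositions
   of its letters by fixed operations on families of states, one for each connective. In M_pq the letters of phi(?p,?q) are interpreted by [?p], [?q], or
   (for letters other than p, q) by the family containing only the empty state. The seven
   families of pq_closure contain these and the trivial families and are closed under all the
   operations, so they contain the proposition of every phi(?p,?q); A, B and C are not among
   them. *)

theory Submission
  imports Defs
begin

text \<open>A state over the worlds 1, 2, 3 is encoded by its three membership bits, and a family of
  states by a predicate on bit triples; equality of families is then decided by evaluation.\<close>

type_synonym pred3 = "bool \<Rightarrow> bool \<Rightarrow> bool \<Rightarrow> bool"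

definition state :: "bool \<Rightarrow> bool \<Rightarrow> bool \<Rightarrow> nat set" where
  "state x y z = {w. w = 1 \<and> x \<or> w = 2 \<and> y \<or> w = 3 \<and> z}"

lemma state_mem [simp]:
  "1 \<in> state x y z \<longleftrightarrow> x" "Suc 0 \<in> state x y z \<longleftrightarrow> x"
  "2 \<in> state x y z \<longleftrightarrow> y" "3 \<in> state x y z \<longleftrightarrow> z"
  by (auto simp: state_def)

lemma state_subset_iff:
  "state x y z \<subseteq> s \<longleftrightarrow> (x \<longrightarrow> 1 \<in> s) \<and> (y \<longrightarrow> 2 \<in> s) \<and> (z \<longrightarrow> 3 \<in> s)"
  by (auto simp: state_def)

lemma state_subset_worlds: "state x y z \<subseteq> {1,2,3}"
  by (simp add: state_subset_iff)

lemma state_of_mem: "s \<subseteq> {1,2,3} \<Longrightarrow> state (1 \<in> s) (2 \<in> s) (3 \<in> s) = s"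
  by (auto simp: state_def)

lemma state_Un: "state x1 y1 z1 \<union> state x2 y2 z2 = state (x1 \<or> x2) (y1 \<or> y2) (z1 \<or> z2)"
  by (auto simp: state_def)

definition supp_char :: "(nat \<Rightarrow> 'v set) \<Rightarrow> 'v form \<Rightarrow> pred3 \<Rightarrow> bool" where
  "supp_char V f G \<longleftrightarrow> (\<forall>s \<subseteq> {1,2,3}. supp V s f \<longleftrightarrow> G (1 \<in> s) (2 \<in> s) (3 \<in> s))"

lemma supp_char_state:
  "supp_char V f G \<Longrightarrow> supp V (state x y z) f \<longleftrightarrow> G x y z"
  using state_subset_worlds by (fastforce simp: supp_char_def)

lemma supp_char_pred_cong:
  "supp_char V f G \<Longrightarrow> (\<And>x y z. G x y z \<longleftrightarrow> H x y z) \<Longrightarrow> supp_char V f H"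
  by (simp add: supp_char_def)

definition neg_pred :: "pred3 \<Rightarrow> pred3" where
  "neg_pred G x y z \<longleftrightarrow>
     (\<forall>x' y' z'. (x' \<longrightarrow> x) \<and> (y' \<longrightarrow> y) \<and> (z' \<longrightarrow> z) \<and> G x' y' z' \<longrightarrow> \<not> x' \<and> \<not> y' \<and> \<not> z')"

definition tens_pred :: "pred3 \<Rightarrow> pred3 \<Rightarrow> pred3" where
  "tens_pred G H x y z \<longleftrightarrow>
     (\<exists>x1 y1 z1 x2 y2 z2. x = (x1 \<or> x2) \<and> y = (y1 \<or> y2) \<and> z = (z1 \<or> z2)
        \<and> G x1 y1 z1 \<and> H x2 y2 z2)"

lemma tens_predI:
  "G x1 y1 z1 \<Longrightarrow> H x2 y2 z2 \<Longrightarrow> tens_pred G H (x1 \<or> x2) (y1 \<or> y2) (z1 \<or> z2)"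
  unfolding tens_pred_def
  by (intro exI[of _ x1] exI[of _ y1] exI[of _ z1] exI[of _ x2] exI[of _ y2] exI[of _ z2]) simp

lemma supp_char_bot: "supp_char V FBot (\<lambda>x y z. \<not> x \<and> \<not> y \<and> \<not> z)"
  by (auto simp: supp_char_def)

lemma supp_char_top: "supp_char V FTop (\<lambda>x y z. True)"
  by (simp add: supp_char_def)

lemma supp_char_atom:
  "supp_char V (Atom p) (\<lambda>x y z. (x \<longrightarrow> p \<in> V 1) \<and> (y \<longrightarrow> p \<in> V 2) \<and> (z \<longrightarrow> p \<in> V 3))"
  by (auto simp: supp_char_def)

lemma supp_char_neg:
  assumes "supp_char V f G"
  shows "supp_char V (FNeg f) (neg_pred G)"
  unfolding supp_char_def
proof (intro allI impI)
  fix s :: "nat set"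
  assume s: "s \<subseteq> {1,2,3}"
  show "supp V s (FNeg f) \<longleftrightarrow> neg_pred G (1 \<in> s) (2 \<in> s) (3 \<in> s)"
  proof
    assume neg: "supp V s (FNeg f)"
    show "neg_pred G (1 \<in> s) (2 \<in> s) (3 \<in> s)"
      unfolding neg_pred_def
    proof (intro allI impI)
      fix x y z
      assume "(x \<longrightarrow> 1 \<in> s) \<and> (y \<longrightarrow> 2 \<in> s) \<and> (z \<longrightarrow> 3 \<in> s) \<and> G x y z"
      then have "state x y z \<subseteq> s" "supp V (state x y z) f"
        by (simp_all add: state_subset_iff supp_char_state[OF assms])
      with neg have "state x y z = {}" by simp
      then show "\<not> x \<and> \<not> y \<and> \<not> z"
        by (metis empty_iff state_mem(1,3,4))
    qed
  next
    assume neg_G: "neg_pred G (1 \<in> s) (2 \<in> s) (3 \<in> s)"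
    show "supp V s (FNeg f)"
    proof (simp, intro allI impI)
      fix t
      assume t: "t \<subseteq> s" "supp V t f"
      with s assms have "G (1 \<in> t) (2 \<in> t) (3 \<in> t)"
        by (simp add: supp_char_def)
      with neg_G t(1) have "1 \<notin> t \<and> 2 \<notin> t \<and> 3 \<notin> t"
        unfolding neg_pred_def by blast
      with s t(1) show "t = {}" by blast
    qed
  qed
qed

lemma supp_char_que:
  "supp_char V f G \<Longrightarrow> supp_char V (FQue f) (\<lambda>x y z. G x y z \<or> neg_pred G x y z)"
  using supp_char_neg[of V f G] by (simp add: supp_char_def)

lemma supp_char_conj:
  "supp_char V f G \<Longrightarrow> supp_char V g H \<Longrightarrow> supp_char V (FConj f g) (\<lambda>x y z. G x y z \<and> H x y z)"
  by (simp add: supp_char_def)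

lemma supp_char_disj:
  "supp_char V f G \<Longrightarrow> supp_char V g H \<Longrightarrow> supp_char V (FDisj f g) (\<lambda>x y z. G x y z \<or> H x y z)"
  by (simp add: supp_char_def)

lemma supp_char_tens:
  assumes f: "supp_char V f G" and g: "supp_char V g H"
  shows "supp_char V (FTens f g) (tens_pred G H)"
  unfolding supp_char_def
proof (intro allI impI)
  fix s :: "nat set"
  assume s: "s \<subseteq> {1,2,3}"
  show "supp V s (FTens f g) \<longleftrightarrow> tens_pred G H (1 \<in> s) (2 \<in> s) (3 \<in> s)"
  proof
    assume "supp V s (FTens f g)"
    then obtain t1 t2 where t: "s = t1 \<union> t2" "supp V t1 f" "supp V t2 g"
      by auto
    with s f g have "G (1 \<in> t1) (2 \<in> t1) (3 \<in> t1)" "H (1 \<in> t2) (2 \<in> t2) (3 \<in> t2)"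
      by (auto simp: supp_char_def)
    from tens_predI[where G = G and H = H, OF this] t(1) show "tens_pred G H (1 \<in> s) (2 \<in> s) (3 \<in> s)"
      by simp
  next
    assume "tens_pred G H (1 \<in> s) (2 \<in> s) (3 \<in> s)"
    then obtain x1 y1 z1 x2 y2 z2 where
      bits: "1 \<in> s \<longleftrightarrow> x1 \<or> x2" "2 \<in> s \<longleftrightarrow> y1 \<or> y2" "3 \<in> s \<longleftrightarrow> z1 \<or> z2"
      and GH: "G x1 y1 z1" "H x2 y2 z2"
      unfolding tens_pred_def by (elim exE conjE)
    have "s = state x1 y1 z1 \<union> state x2 y2 z2"
      using state_of_mem[OF s] bits by (simp add: state_Un)
    moreover have "supp V (state x1 y1 z1) f" "supp V (state x2 y2 z2) g"
      using supp_char_state[OF f] supp_char_state[OF g] GH by auto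
    ultimately show "supp V s (FTens f g)" by auto
  qed
qed

definition connective_closed :: "pred3 set \<Rightarrow> bool" where
  "connective_closed P \<longleftrightarrow>
     (\<lambda>x y z. \<not> x \<and> \<not> y \<and> \<not> z) \<in> P \<and> (\<lambda>x y z. True) \<in> P \<and>
     (\<forall>G \<in> P. neg_pred G \<in> P) \<and>
     (\<forall>G \<in> P. \<forall>H \<in> P. (\<lambda>x y z. G x y z \<and> H x y z) \<in> P) \<and>
     (\<forall>G \<in> P. \<forall>H \<in> P. (\<lambda>x y z. G x y z \<or> H x y z) \<in> P) \<and>
     (\<forall>G \<in> P. \<forall>H \<in> P. tens_pred G H \<in> P)"

lemma supp_char_subst:
  assumes P: "connective_closed P"
    and atoms: "\<And>x. x \<in> atoms \<phi> \<Longrightarrow> \<exists>G \<in> P. supp_char V (\<sigma> x) G"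
  shows "\<exists>G \<in> P. supp_char V (subst \<sigma> \<phi>) G"
  using atoms
proof (induction \<phi>)
  case FBot
  from P have "(\<lambda>x y z. \<not> x \<and> \<not> y \<and> \<not> z) \<in> P" by (simp add: connective_closed_def)
  with supp_char_bot show ?case by auto
next
  case FTop
  from P have "(\<lambda>x y z. True) \<in> P" by (simp add: connective_closed_def)
  with supp_char_top show ?case by auto
next
  case (Atom x)
  then show ?case by simp
next
  case (FNeg f)
  then obtain G where G: "G \<in> P" "supp_char V (subst \<sigma> f) G" by auto
  from P G(1) have "neg_pred G \<in> P" by (simp add: connective_closed_def)
  with supp_char_neg[OF G(2)] show ?case by auto
next
  case (FQue f)
  then obtain G where G: "G \<in> P" "supp_char V (subst \<sigma> f) G" by auto
  from P G(1) have "(\<lambda>x y z. G x y z \<or> neg_pred G x y z) \<in> P" by (simp add: connective_closed_def)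
  with supp_char_que[OF G(2)] show ?case by auto
next
  case (FConj f g)
  then obtain G H where G: "G \<in> P" "supp_char V (subst \<sigma> f) G"
    and H: "H \<in> P" "supp_char V (subst \<sigma> g) H" by auto
  from P G(1) H(1) have "(\<lambda>x y z. G x y z \<and> H x y z) \<in> P" by (simp add: connective_closed_def)
  with supp_char_conj[OF G(2) H(2)] show ?case by auto
next
  case (FDisj f g)
  then obtain G H where G: "G \<in> P" "supp_char V (subst \<sigma> f) G"
    and H: "H \<in> P" "supp_char V (subst \<sigma> g) H" by auto
  from P G(1) H(1) have "(\<lambda>x y z. G x y z \<or> H x y z) \<in> P" by (simp add: connective_closed_def)
  with supp_char_disj[OF G(2) H(2)] show ?case by auto
next
  case (FTens f g)
  then obtain G H where G: "G \<in> P" "supp_char V (subst \<sigma> f) G"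
    and H: "H \<in> P" "supp_char V (subst \<sigma> g) H" by auto
  from P G(1) H(1) have "tens_pred G H \<in> P" by (simp add: connective_closed_def)
  with supp_char_tens[OF G(2) H(2)] show ?case by auto
qed

definition fam_pred :: "nat set set \<Rightarrow> pred3" where
  "fam_pred X x y z \<longleftrightarrow> state x y z \<in> X"

lemma fam_pred_prop_of:
  assumes "supp_char V f G"
  shows "fam_pred (prop_of ({1,2,3}, V) f) = G"
  using supp_char_state[OF assms] state_subset_worlds
  by (simp add: fun_eq_iff fam_pred_def prop_of_def)

text \<open>In the order listed: the families \<open>{{}}\<close>, all states, \<open>[?p]\<close>, \<open>[?q]\<close>, the states
  with at most one world, the states other than \<open>{1,2,3}\<close>, and the states not containing \<open>{1,2}\<close>.\<close>

definition pq_closure :: "pred3 set" where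
  "pq_closure =
    {\<lambda>x y z. \<not> x \<and> \<not> y \<and> \<not> z,
     \<lambda>x y z. True,
     \<lambda>x y z. \<not> x \<or> \<not> y \<and> \<not> z,
     \<lambda>x y z. \<not> y \<or> \<not> x \<and> \<not> z,
     \<lambda>x y z. \<not> (x \<and> y) \<and> \<not> (x \<and> z) \<and> \<not> (y \<and> z),
     \<lambda>x y z. \<not> (x \<and> y \<and> z),
     \<lambda>x y z. \<not> (x \<and> y)}"

lemma connective_closed_pq_closure: "connective_closed pq_closure"
  unfolding connective_closed_def
proof (intro conjI ballI)
  fix G H
  assume "G \<in> pq_closure" "H \<in> pq_closure"
  then show "(\<lambda>x y z. G x y z \<and> H x y z) \<in> pq_closure" "(\<lambda>x y z. G x y z \<or> H x y z) \<in> pq_closure"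
    "tens_pred G H \<in> pq_closure"
    unfolding pq_closure_def
    by (elim insertE emptyE; simp add: tens_pred_def fun_eq_iff all_bool_eq ex_bool_eq)+
next
  fix G
  assume "G \<in> pq_closure"
  then show "neg_pred G \<in> pq_closure"
    unfolding pq_closure_def
    by (elim insertE emptyE; simp add: neg_pred_def fun_eq_iff all_bool_eq)
qed (simp_all add: pq_closure_def)

lemma supp_char_Mpq:
  assumes "p \<noteq> q"
  shows "supp_char (snd (Mpq p q)) (FQue (Atom p)) (\<lambda>x y z. \<not> x \<or> \<not> y \<and> \<not> z)"
    and "supp_char (snd (Mpq p q)) (FQue (Atom q)) (\<lambda>x y z. \<not> y \<or> \<not> x \<and> \<not> z)"
    and "r \<noteq> p \<Longrightarrow> r \<noteq> q \<Longrightarrow> supp_char (snd (Mpq p q)) (Atom r) (\<lambda>x y z. \<not> x \<and> \<not> y \<and> \<not> z)"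
  using assms
  by (auto simp: Mpq_def neg_pred_def all_bool_eq
      intro!: supp_char_pred_cong[OF supp_char_que[OF supp_char_atom]] supp_char_pred_cong[OF supp_char_atom])

lemma not_in_pq_closure:
  "fam_pred famA \<notin> pq_closure" "fam_pred famB \<notin> pq_closure" "fam_pred famC \<notin> pq_closure"
  by (simp_all add: fam_pred_def famA_def famB_def famC_def downset_def state_subset_iff
      pq_closure_def fun_eq_iff all_bool_eq)

lemma fam_pred_prop_of_Mpq_subst:
  assumes "p \<noteq> q" "p \<notin> atoms \<phi>" "q \<notin> atoms \<phi>"
  shows "fam_pred (prop_of (Mpq p q)
           (subst (\<lambda>x. if x = a then FQue (Atom p) else if x = b then FQue (Atom q) else Atom x) \<phi>))
         \<in> pq_closure"
proof -
  have "\<exists>G \<in> pq_closure. supp_char (snd (Mpq p q))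
          (subst (\<lambda>x. if x = a then FQue (Atom p) else if x = b then FQue (Atom q) else Atom x) \<phi>) G"
  proof (rule supp_char_subst[OF connective_closed_pq_closure])
    fix x
    assume "x \<in> atoms \<phi>"
    with assms have "x \<noteq> p" "x \<noteq> q" by auto
    with supp_char_Mpq[OF assms(1)] show "\<exists>G \<in> pq_closure. supp_char (snd (Mpq p q))
        (if x = a then FQue (Atom p) else if x = b then FQue (Atom q) else Atom x) G"
      by (simp add: pq_closure_def)
  qed
  moreover have "Mpq p q = ({1,2,3}, snd (Mpq p q))"
    by (simp add: Mpq_def)
  ultimately show ?thesis
    using fam_pred_prop_of by metis
qed

theorem lemma2:
  fixes p q a b :: nat and \<phi> :: "nat form"
  assumes "p \<noteq> q" and "a \<noteq> b"
    and "p \<notin> atoms \<phi>" and "q \<notin> atoms \<phi>"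
  shows "let \<psi> = subst (\<lambda>x. if x = a then FQue (Atom p) else if x = b then FQue (Atom q) else Atom x) \<phi>
         in prop_of (Mpq p q) \<psi> \<noteq> famA \<and> prop_of (Mpq p q) \<psi> \<noteq> famB \<and> prop_of (Mpq p q) \<psi> \<noteq> famC"
  using fam_pred_prop_of_Mpq_subst[OF assms(1,3,4), of a b] not_in_pq_closure
  by (auto simp: Let_def)

end
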